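(* Let $G$ be a mirror graph and let $A\le\mathrm{Aut}(G)$ be the subgroup generated by all mirror automorphisms of $G$. Then $A$ acts regularly on $V(G)$ (transitively, with trivial vertex stabilizers). Consequently, for any vertex $v$ with neighbours $v_1,\dots,v_k$, $G\cong\mathrm{Cay}(A,\{\alpha_{vv_1},\dots,\alpha_{vv_k}\})$.
   Context: A mirror graph is a finite connected simple graph $G$ admitting a partition $\{E_1,\dots,E_k\}$ of its edges such that for every $i$ there is an automorphism $\alpha_i$ swapping the endpoints of every edge of $E_i$, with $G-E_i$ having exactly two components that $\alpha_i$ maps isomorphically onto each other. Mirror graphs are partial cubes whose mirror partition is the partition into $\Theta$-classes ($ab\,\Theta\,xy$ iff $d(a,x)+d(b,y)\neq d(a,y)+d(b,x)$). For an edge $xy$, the mirror automorphism $\alpha_{xy}$ is the unique automorphism swapping the endpoints of every edge $\Theta$-equivalent to $xy$. $\mathrm{Cay}(A,S)$ has vertex set $A$, with $\beta_1,\beta_2$ adjacent iff $\beta_1=s\beta_2$ for some $s\in S$. *)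

theory Defs
  imports "HOL-Algebra.Bij" "HOL-Algebra.Generated_Groups"
begin

definition simple_graph :: "'a set \<Rightarrow> ('a \<Rightarrow> 'a \<Rightarrow> bool) \<Rightarrow> bool" where
  "simple_graph V E \<longleftrightarrow>
     (\<forall>x y. E x y \<longrightarrow> x \<in> V \<and> y \<in> V) \<and> (\<forall>x y. E x y \<longrightarrow> E y x) \<and> (\<forall>x. \<not> E x x)"

definition finite_connected_simple_graph :: "'a set \<Rightarrow> ('a \<Rightarrow> 'a \<Rightarrow> bool) \<Rightarrow> bool" where
  "finite_connected_simple_graph V E \<longleftrightarrow>
     simple_graph V E \<and> finite V \<and> V \<noteq> {} \<and> (\<forall>x\<in>V. \<forall>y\<in>V. E\<^sup>*\<^sup>* x y)"

definition edges :: "('a \<Rightarrow> 'a \<Rightarrow> bool) \<Rightarrow> 'a set set" where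
  "edges E = {{x, y} | x y. E x y}"

definition components :: "'a set \<Rightarrow> ('a \<Rightarrow> 'a \<Rightarrow> bool) \<Rightarrow> 'a set set" where
  "components V E = {{y \<in> V. E\<^sup>*\<^sup>* x y} | x. x \<in> V}"

definition remove_edges :: "('a \<Rightarrow> 'a \<Rightarrow> bool) \<Rightarrow> 'a set set \<Rightarrow> 'a \<Rightarrow> 'a \<Rightarrow> bool" where
  "remove_edges E F = (\<lambda>x y. E x y \<and> {x, y} \<notin> F)"

text \<open>Automorphisms, as elements of the symmetric group BijGroup V
  (bijections of V, extensional, i.e. undefined outside V).\<close>
definition graph_aut :: "'a set \<Rightarrow> ('a \<Rightarrow> 'a \<Rightarrow> bool) \<Rightarrow> ('a \<Rightarrow> 'a) \<Rightarrow> bool" where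
  "graph_aut V E f \<longleftrightarrow> f \<in> Bij V \<and> (\<forall>x\<in>V. \<forall>y\<in>V. E x y \<longleftrightarrow> E (f x) (f y))"

definition swaps_edges :: "('a \<Rightarrow> 'a) \<Rightarrow> 'a set set \<Rightarrow> bool" where
  "swaps_edges f F \<longleftrightarrow> (\<forall>x y. {x, y} \<in> F \<longrightarrow> f x = y)"

definition mirror_graph :: "'a set \<Rightarrow> ('a \<Rightarrow> 'a \<Rightarrow> bool) \<Rightarrow> bool" where
  "mirror_graph V E \<longleftrightarrow> finite_connected_simple_graph V E \<and>
     (\<exists>P. \<Union>P = edges E \<and> {} \<notin> P \<and> (\<forall>F1\<in>P. \<forall>F2\<in>P. F1 \<noteq> F2 \<longrightarrow> F1 \<inter> F2 = {}) \<and>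
        (\<forall>F\<in>P. \<exists>\<alpha>. graph_aut V E \<alpha> \<and> swaps_edges \<alpha> F \<and>
            (\<exists>C1 C2. C1 \<noteq> C2 \<and> components V (remove_edges E F) = {C1, C2} \<and>
                     \<alpha> ` C1 = C2 \<and> \<alpha> ` C2 = C1)))"

definition gdist :: "('a \<Rightarrow> 'a \<Rightarrow> bool) \<Rightarrow> 'a \<Rightarrow> 'a \<Rightarrow> nat" where
  "gdist E x y = (LEAST n. (E ^^ n) x y)"

definition Theta :: "('a \<Rightarrow> 'a \<Rightarrow> bool) \<Rightarrow> 'a \<Rightarrow> 'a \<Rightarrow> 'a \<Rightarrow> 'a \<Rightarrow> bool" where
  "Theta E a b x y \<longleftrightarrow> E a b \<and> E x y \<and>
     gdist E a x + gdist E b y \<noteq> gdist E a y + gdist E b x"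

definition mirror_aut :: "'a set \<Rightarrow> ('a \<Rightarrow> 'a \<Rightarrow> bool) \<Rightarrow> 'a \<Rightarrow> 'a \<Rightarrow> 'a \<Rightarrow> 'a" where
  "mirror_aut V E x y = (THE \<alpha>. graph_aut V E \<alpha> \<and>
      (\<forall>a b. Theta E a b x y \<longrightarrow> \<alpha> a = b \<and> \<alpha> b = a))"

definition mirror_auts :: "'a set \<Rightarrow> ('a \<Rightarrow> 'a \<Rightarrow> bool) \<Rightarrow> ('a \<Rightarrow> 'a) set" where
  "mirror_auts V E = {mirror_aut V E x y | x y. E x y}"

definition mirror_group :: "'a set \<Rightarrow> ('a \<Rightarrow> 'a \<Rightarrow> bool) \<Rightarrow> ('a \<Rightarrow> 'a) set" where
  "mirror_group V E = generate (BijGroup V) (mirror_auts V E)"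

definition cayley_adj :: "('g, 'm) monoid_scheme \<Rightarrow> 'g set \<Rightarrow> 'g \<Rightarrow> 'g \<Rightarrow> bool" where
  "cayley_adj G S b1 b2 \<longleftrightarrow> (\<exists>s\<in>S. b1 = s \<otimes>\<^bsub>G\<^esub> b2)"

definition graph_iso :: "'a set \<Rightarrow> ('a \<Rightarrow> 'a \<Rightarrow> bool) \<Rightarrow> 'b set \<Rightarrow> ('b \<Rightarrow> 'b \<Rightarrow> bool) \<Rightarrow> bool" where
  "graph_iso V E W F \<longleftrightarrow> (\<exists>\<phi>. bij_betw \<phi> V W \<and> (\<forall>x\<in>V. \<forall>y\<in>V. E x y \<longleftrightarrow> F (\<phi> x) (\<phi> y)))"

end

theory Submission
  imports Defs
begin

text \<open>Fix a mirror partition with reflections \<open>\<alpha>\<^sub>F\<close>. Each \<open>G - F\<close> has two sides of equal size,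
  and the distance between two vertices is the number of classes whose sides separate them
  (reflecting the part of a walk before an \<open>F\<close>-edge shows that a geodesic never crosses a class
  twice). Hence \<open>\<Theta>\<close> is exactly "same class", \<open>\<alpha>\<^sub>F\<close> is the only automorphism swapping \<open>F\<close>
  and is the mirror automorphism of every edge of \<open>F\<close>.

  Every element of the group \<open>A\<close> generated by the mirror automorphisms is the product of the
  mirror automorphisms along a walk starting at any prescribed vertex, and this product maps
  the start of the walk to its end. Connectivity gives transitivity. A closed walk has
  trivial product: reflecting its part between its first edge and the next edge of the same
  class gives a closed walk two edges shorter with the same product. So stabilisers are
  trivial, and \<open>g \<mapsto> g v\<close> identifies \<open>A\<close> with \<open>V\<close> and the Cayley graph with \<open>G\<close>.\<close>

lemma rtranclp_leaves_rtranclp: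
  assumes "Q\<^sup>*\<^sup>* x y" "\<not> S\<^sup>*\<^sup>* x y"
  shows "\<exists>z z'. Q\<^sup>*\<^sup>* x z \<and> Q z z' \<and> \<not> S\<^sup>*\<^sup>* z z'"
  using assms
proof induction
  case base
  then show ?case by simp
next
  case (step y z)
  show ?case
  proof (cases "S\<^sup>*\<^sup>* x y")
    case True
    then have "\<not> S\<^sup>*\<^sup>* y z" using step.prems by (meson rtranclp_trans)
    then show ?thesis using step.hyps by blast
  next
    case False
    then show ?thesis using step.IH by blast
  qed
qed

lemma (in group) conj_mult:
  assumes "p \<in> carrier G" "a \<in> carrier G" "b \<in> carrier G"
  shows "p \<otimes> a \<otimes> inv p \<otimes> (p \<otimes> b \<otimes> inv p) = p \<otimes> (a \<otimes> b) \<otimes> inv p"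
proof -
  have "inv p \<otimes> (p \<otimes> c) = c" if "c \<in> carrier G" for c
    using assms(1) that by (simp add: m_assoc[symmetric])
  then show ?thesis using assms by (simp add: m_assoc)
qed

lemma carrier_BijGroup: "carrier (BijGroup S) = Bij S"
  by (simp add: BijGroup_def)

lemma BijGroup_mult_apply:
  "f \<in> carrier (BijGroup S) \<Longrightarrow> g \<in> carrier (BijGroup S) \<Longrightarrow> x \<in> S \<Longrightarrow>
     (f \<otimes>\<^bsub>BijGroup S\<^esub> g) x = f (g x)"
  by (simp add: BijGroup_def compose_def)

lemma BijGroup_one_apply: "x \<in> S \<Longrightarrow> \<one>\<^bsub>BijGroup S\<^esub> x = x"
  by (simp add: BijGroup_def)

lemma BijGroup_inv_apply:
  assumes "f \<in> carrier (BijGroup S)" "x \<in> S"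
  shows "f ((inv\<^bsub>BijGroup S\<^esub> f) x) = x" "(inv\<^bsub>BijGroup S\<^esub> f) (f x) = x"
proof -
  have "bij_betw f S S" using assms(1) by (simp add: Bij_def carrier_BijGroup)
  then have "inj_on f S" "f ` S = S" "f x \<in> S" using assms(2) by (auto simp: bij_betw_def)
  then show "f ((inv\<^bsub>BijGroup S\<^esub> f) x) = x" "(inv\<^bsub>BijGroup S\<^esub> f) (f x) = x"
    using assms by (simp_all add: inv_BijGroup f_inv_into_f carrier_BijGroup)
qed

lemma subgroup_graph_aut: "subgroup {f. graph_aut V E f} (BijGroup V)"
proof (rule subgroup.intro)
  show "{f. graph_aut V E f} \<subseteq> carrier (BijGroup V)"
    by (auto simp: graph_aut_def carrier_BijGroup)
  show "\<one>\<^bsub>BijGroup V\<^esub> \<in> {f. graph_aut V E f}"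
    using id_Bij by (simp add: graph_aut_def BijGroup_def)
next
  fix f g assume "f \<in> {f. graph_aut V E f}" "g \<in> {f. graph_aut V E f}"
  then have f: "f \<in> Bij V" "\<And>x y. x \<in> V \<Longrightarrow> y \<in> V \<Longrightarrow> E x y \<longleftrightarrow> E (f x) (f y)"
    and g: "g \<in> Bij V" "\<And>x y. x \<in> V \<Longrightarrow> y \<in> V \<Longrightarrow> E x y \<longleftrightarrow> E (g x) (g y)"
    by (auto simp: graph_aut_def)
  have gV: "g x \<in> V" if "x \<in> V" for x using g(1) that Bij_imp_funcset by blast
  have "f \<otimes>\<^bsub>BijGroup V\<^esub> g \<in> Bij V" using f(1) g(1) by (simp add: BijGroup_def compose_Bij)
  moreover have "E x y \<longleftrightarrow> E ((f \<otimes>\<^bsub>BijGroup V\<^esub> g) x) ((f \<otimes>\<^bsub>BijGroup V\<^esub> g) y)"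
    if "x \<in> V" "y \<in> V" for x y
    using f(2)[OF gV gV] g(2) BijGroup_mult_apply[of f V g] f(1) g(1) that by (simp add: carrier_BijGroup)
  ultimately show "f \<otimes>\<^bsub>BijGroup V\<^esub> g \<in> {f. graph_aut V E f}" by (simp add: graph_aut_def)
next
  fix f assume "f \<in> {f. graph_aut V E f}"
  then have f: "f \<in> Bij V" "\<And>x y. x \<in> V \<Longrightarrow> y \<in> V \<Longrightarrow> E x y \<longleftrightarrow> E (f x) (f y)"
    by (auto simp: graph_aut_def)
  define f' where "f' = inv\<^bsub>BijGroup V\<^esub> f"
  have f': "f' \<in> Bij V"
    using group.inv_closed[OF group_BijGroup] f(1) by (simp add: carrier_BijGroup f'_def)
  have "f' x \<in> V" if "x \<in> V" for x using f' that Bij_imp_funcset by blast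
  then have "E x y \<longleftrightarrow> E (f' x) (f' y)" if "x \<in> V" "y \<in> V" for x y
    using f(2)[of "f' x" "f' y"] BijGroup_inv_apply(1)[of f V] f(1) that
    by (simp add: f'_def carrier_BijGroup)
  then show "inv\<^bsub>BijGroup V\<^esub> f \<in> {f. graph_aut V E f}" using f' by (simp add: graph_aut_def f'_def)
qed

locale mirror_partition =
  fixes V :: "'a set" and E :: "'a \<Rightarrow> 'a \<Rightarrow> bool" and P :: "'a set set set"
  assumes graph: "finite_connected_simple_graph V E"
    and classes_cover: "\<Union>P = edges E" and classes_nonempty: "{} \<notin> P"
    and classes_disjoint: "\<forall>F1\<in>P. \<forall>F2\<in>P. F1 \<noteq> F2 \<longrightarrow> F1 \<inter> F2 = {}"
    and classes_mirror: "\<forall>F\<in>P. \<exists>\<alpha>. graph_aut V E \<alpha> \<and> swaps_edges \<alpha> F \<and>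
            (\<exists>C1 C2. C1 \<noteq> C2 \<and> components V (remove_edges E F) = {C1, C2} \<and>
                     \<alpha> ` C1 = C2 \<and> \<alpha> ` C2 = C1)"
begin

lemma edge_in_V: "E x y \<Longrightarrow> x \<in> V \<and> y \<in> V"
  and edge_sym: "E x y \<Longrightarrow> E y x"
  and finite_V: "finite V"
  and connected: "x \<in> V \<Longrightarrow> y \<in> V \<Longrightarrow> E\<^sup>*\<^sup>* x y"
  using graph by (auto simp: finite_connected_simple_graph_def simple_graph_def)

lemma doubleton_in_edges_iff: "{x, y} \<in> edges E \<longleftrightarrow> E x y"
  unfolding edges_def by (auto simp: doubleton_eq_iff intro: edge_sym)

lemma class_edge: "F \<in> P \<Longrightarrow> {x, y} \<in> F \<Longrightarrow> E x y"
  using classes_cover doubleton_in_edges_iff by blast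

lemma class_has_edge: "F \<in> P \<Longrightarrow> \<exists>a b. {a, b} \<in> F"
proof -
  assume F: "F \<in> P"
  then obtain e where "e \<in> F" using classes_nonempty by (metis all_not_in_conv)
  moreover have "e \<in> edges E" using F \<open>e \<in> F\<close> classes_cover by blast
  ultimately show ?thesis unfolding edges_def by blast
qed

lemma finite_classes: "finite P"
proof -
  have "edges E \<subseteq> Pow V" unfolding edges_def using edge_in_V by auto
  then have "finite (\<Union>P)" using classes_cover finite_V by (metis finite_Pow_iff finite_subset)
  then show ?thesis using finite_UnionD by blast
qed

lemma class_unique: "F1 \<in> P \<Longrightarrow> F2 \<in> P \<Longrightarrow> e \<in> F1 \<Longrightarrow> e \<in> F2 \<Longrightarrow> F1 = F2"
  using classes_disjoint by blast

definition edge_class :: "'a \<Rightarrow> 'a \<Rightarrow> 'a set set" where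
  "edge_class x y = (THE F. F \<in> P \<and> {x, y} \<in> F)"

lemma edge_class_eq: "F \<in> P \<Longrightarrow> {x, y} \<in> F \<Longrightarrow> edge_class x y = F"
  unfolding edge_class_def by (rule the_equality) (simp, metis class_unique)

lemma edge_class:
  assumes "E x y" shows "edge_class x y \<in> P" "{x, y} \<in> edge_class x y"
proof -
  obtain F where "F \<in> P" "{x, y} \<in> F"
    using assms classes_cover doubleton_in_edges_iff by blast
  then show "edge_class x y \<in> P" "{x, y} \<in> edge_class x y" using edge_class_eq by auto
qed

lemma edge_class_sym: "edge_class x y = edge_class y x"
  unfolding edge_class_def by (simp add: insert_commute)

definition reflection :: "'a set set \<Rightarrow> 'a \<Rightarrow> 'a" where
  "reflection F = (SOME \<alpha>. graph_aut V E \<alpha> \<and> swaps_edges \<alpha> F \<and>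
            (\<exists>C1 C2. C1 \<noteq> C2 \<and> components V (remove_edges E F) = {C1, C2} \<and>
                     \<alpha> ` C1 = C2 \<and> \<alpha> ` C2 = C1))"

lemma reflection:
  assumes "F \<in> P"
  shows "graph_aut V E (reflection F)" "swaps_edges (reflection F) F"
    "\<exists>C1 C2. C1 \<noteq> C2 \<and> components V (remove_edges E F) = {C1, C2} \<and>
         reflection F ` C1 = C2 \<and> reflection F ` C2 = C1"
  using someI_ex[OF bspec[OF classes_mirror assms]] unfolding reflection_def[symmetric] by blast+

lemma reflection_swap: "F \<in> P \<Longrightarrow> {x, y} \<in> F \<Longrightarrow> reflection F x = y"
  using reflection(2) unfolding swaps_edges_def by blast

definition same_side :: "'a set set \<Rightarrow> 'a \<Rightarrow> 'a \<Rightarrow> bool" where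
  "same_side F = (remove_edges E F)\<^sup>*\<^sup>*"

definition side :: "'a set set \<Rightarrow> 'a \<Rightarrow> 'a set" where
  "side F u = {y \<in> V. same_side F u y}"

lemma same_side_refl [simp]: "same_side F x x"
  by (simp add: same_side_def)

lemma same_side_sym: "same_side F x y \<Longrightarrow> same_side F y x"
proof -
  have "symp (remove_edges E F)"
    unfolding symp_def remove_edges_def by (auto simp: insert_commute intro: edge_sym)
  then show "same_side F x y \<Longrightarrow> same_side F y x"
    unfolding same_side_def by (meson symp_rtranclp sympD)
qed

lemma same_side_trans: "same_side F x y \<Longrightarrow> same_side F y z \<Longrightarrow> same_side F x z"
  unfolding same_side_def by (rule rtranclp_trans)

lemma same_side_edge: "E x y \<Longrightarrow> {x, y} \<notin> F \<Longrightarrow> same_side F x y"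
  unfolding same_side_def remove_edges_def by (simp add: r_into_rtranclp)

lemma same_side_other_class:
  assumes "F \<in> P" "E x y" "F \<noteq> edge_class x y"
  shows "same_side F x y"
  using assms edge_class[OF assms(2)] class_unique same_side_edge by blast

lemma same_side_in_V: "same_side F x y \<Longrightarrow> x \<in> V \<Longrightarrow> y \<in> V"
  unfolding same_side_def
  by (induction rule: rtranclp_induct) (auto simp: remove_edges_def dest: edge_in_V)

lemma side_self: "u \<in> V \<Longrightarrow> u \<in> side F u"
  by (simp add: side_def)

lemma side_eq: "same_side F u v \<Longrightarrow> side F u = side F v"
  unfolding side_def by (meson same_side_sym same_side_trans)

lemma side_subset: "side F u \<subseteq> V"
  by (auto simp: side_def)

lemma components_remove_edges: "components V (remove_edges E F) = side F ` V"
  unfolding components_def side_def same_side_def by auto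

lemma sides_of_class:
  assumes F: "F \<in> P" and u: "u \<in> V"
  shows "\<forall>v\<in>V. side F v = side F u \<or> side F v = V - side F u"
    "reflection F ` side F u = V - side F u"
proof -
  obtain C1 C2 where C: "C1 \<noteq> C2" "side F ` V = {C1, C2}"
    "reflection F ` C1 = C2" "reflection F ` C2 = C1"
    using reflection(3)[OF F] unfolding components_remove_edges by (elim exE conjE)
  have side_C: "side F v = C1 \<or> side F v = C2" if "v \<in> V" for v
    using C(2) that by (metis image_eqI insertE singletonD)
  have "C1 \<in> side F ` V" "C2 \<in> side F ` V" using C(2) by simp_all
  then obtain a1 a2 where a: "a1 \<in> V" "C1 = side F a1" "a2 \<in> V" "C2 = side F a2"
    by blast
  have "C1 \<inter> C2 = {}"
  proof (rule ccontr)
    assume "C1 \<inter> C2 \<noteq> {}"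
    then obtain z where "same_side F a1 z" "same_side F a2 z" using a by (auto simp: side_def)
    then have "side F a1 = side F a2" using side_eq same_side_sym same_side_trans by metis
    then show False using a C(1) by simp
  qed
  moreover have "C1 \<union> C2 = V"
  proof
    show "C1 \<union> C2 \<subseteq> V" using a side_subset by simp
    show "V \<subseteq> C1 \<union> C2" using side_C side_self by blast
  qed
  ultimately have complement: "C2 = V - C1" "C1 = V - C2" by blast+
  show "\<forall>v\<in>V. side F v = side F u \<or> side F v = V - side F u"
    using side_C[OF u] side_C complement by metis
  show "reflection F ` side F u = V - side F u"
    using side_C[OF u] C(3,4) complement by metis
qed

lemma class_edge_separates:
  assumes F: "F \<in> P" and xy: "{x, y} \<in> F"
  shows "\<not> same_side F x y"
proof -
  have x: "x \<in> V" using class_edge[OF F xy] edge_in_V by blast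
  have "y \<in> reflection F ` side F x"
    using reflection_swap[OF F xy] side_self[OF x] by (metis image_eqI)
  then have "y \<notin> side F x" using sides_of_class(2)[OF F x] by blast
  then show ?thesis using same_side_in_V[OF _ x] by (auto simp: side_def)
qed

lemma not_same_side_trans:
  assumes F: "F \<in> P" and V: "x \<in> V" "y \<in> V" "u \<in> V"
    and "\<not> same_side F x u" "\<not> same_side F y u"
  shows "same_side F x y"
proof -
  have "u \<notin> side F x" "u \<notin> side F y" using assms(5,6) by (simp_all add: side_def)
  then have "side F x \<noteq> side F u" "side F y \<noteq> side F u" using side_self[OF V(3)] by blast+
  then have "side F x = side F y" using sides_of_class(1)[OF F V(3)] V(1,2) by metis
  then have "y \<in> side F x" using side_self[OF V(2)] by simp
  then show ?thesis by (simp add: side_def)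
qed

lemma card_side:
  assumes F: "F \<in> P" and u: "u \<in> V"
  shows "2 * card (side F u) = card V"
proof -
  have "inj_on (reflection F) V"
    using reflection(1)[OF F] unfolding graph_aut_def Bij_def bij_betw_def by simp
  then have "inj_on (reflection F) (side F u)" using side_subset by (rule inj_on_subset)
  then have "card (V - side F u) = card (side F u)"
    using sides_of_class(2)[OF F u] card_image by metis
  moreover have "finite (side F u)" using finite_subset[OF side_subset finite_V] .
  then have "card (V - side F u) = card V - card (side F u)"
    using side_subset by (rule card_Diff_subset)
  moreover have "card (side F u) \<le> card V" using card_mono[OF finite_V side_subset] .
  ultimately show ?thesis by linarith
qed

lemma aut_in_V: "graph_aut V E f \<Longrightarrow> x \<in> V \<Longrightarrow> f x \<in> V"
  unfolding graph_aut_def Bij_def bij_betw_def by blast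

lemma aut_edge: "graph_aut V E f \<Longrightarrow> E x y \<Longrightarrow> E (f x) (f y)"
  unfolding graph_aut_def using edge_in_V by blast

lemma aut_inj: "graph_aut V E f \<Longrightarrow> x \<in> V \<Longrightarrow> y \<in> V \<Longrightarrow> f x = f y \<Longrightarrow> x = y"
  unfolding graph_aut_def Bij_def bij_betw_def inj_on_def by blast

lemma aut_surj: "graph_aut V E f \<Longrightarrow> y \<in> V \<Longrightarrow> \<exists>x\<in>V. f x = y"
proof -
  assume "graph_aut V E f" "y \<in> V"
  then have "y \<in> f ` V" unfolding graph_aut_def Bij_def bij_betw_def by simp
  then show ?thesis by blast
qed

lemma aut_same_side:
  assumes g: "graph_aut V E g" "swaps_edges g F" and "same_side F x y"
  shows "same_side F (g x) (g y)"
  using assms(3) unfolding same_side_def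
proof induction
  case base
  then show ?case by simp
next
  case (step y z)
  then have yz: "E y z" "{y, z} \<notin> F" "y \<in> V" "z \<in> V"
    using edge_in_V by (auto simp: remove_edges_def)
  have "{g y, g z} \<notin> F"
  proof
    assume gyz: "{g y, g z} \<in> F"
    then have "g (g y) = g z" "g (g z) = g y"
      using g(2) unfolding swaps_edges_def by (auto simp: insert_commute)
    then have "g y = z" "g z = y" using aut_inj[OF g(1)] aut_in_V[OF g(1)] yz by auto
    then show False using gyz yz(2) by (auto simp: insert_commute)
  qed
  then have "remove_edges E F (g y) (g z)"
    using aut_edge[OF g(1) yz(1)] by (simp add: remove_edges_def)
  with step.IH show ?case by (rule rtranclp.rtrancl_into_rtrancl)
qed

lemma aut_swapping_class_crosses:
  assumes F: "F \<in> P" and g: "graph_aut V E g" "swaps_edges g F" and u: "u \<in> V"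
  shows "\<not> same_side F u (g u)"
proof
  assume same: "same_side F u (g u)"
  obtain a b where ab: "{a, b} \<in> F" using class_has_edge F by blast
  have "g a = b" "g b = a" using g(2) ab unfolding swaps_edges_def by (auto simp: insert_commute)
  moreover have "a \<in> V" "b \<in> V" using class_edge[OF F ab] edge_in_V by auto
  moreover have "\<not> same_side F a b" using class_edge_separates[OF F ab] .
  \<comment> \<open>\<open>u\<close> is on the side of \<open>a\<close> or of \<open>b\<close>, and \<open>g\<close> moves it to the side of the other\<close>
  ultimately show False
    using same u aut_same_side[OF g] not_same_side_trans[OF F] same_side_sym same_side_trans
    by metis
qed

lemma aut_relpowp: "graph_aut V E f \<Longrightarrow> (E ^^ n) x y \<Longrightarrow> (E ^^ n) (f x) (f y)"
proof (induction n arbitrary: x)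
  case 0
  then show ?case by simp
next
  case (Suc n)
  then obtain z where "E x z" "(E ^^ n) z y" using relpowp_Suc_D2 by metis
  then show ?case using Suc aut_edge relpowp_Suc_I2 by metis
qed

lemma aut_relpowp_rev:
  "graph_aut V E f \<Longrightarrow> x \<in> V \<Longrightarrow> y \<in> V \<Longrightarrow> (E ^^ n) (f x) (f y) \<Longrightarrow> (E ^^ n) x y"
proof (induction n arbitrary: x)
  case 0
  then show ?case using aut_inj by simp
next
  case (Suc n)
  then obtain z where z: "E (f x) z" "(E ^^ n) z (f y)" using relpowp_Suc_D2 by metis
  then obtain z' where z': "z' \<in> V" "f z' = z" using aut_surj Suc edge_in_V by metis
  have "E x z'" using Suc.prems z z' unfolding graph_aut_def by blast
  then show ?case using Suc z z' relpowp_Suc_I2 by metis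
qed

lemma gdist_le: "(E ^^ n) x y \<Longrightarrow> gdist E x y \<le> n"
  unfolding gdist_def by (rule Least_le)

lemma gdist_relpowp: "x \<in> V \<Longrightarrow> y \<in> V \<Longrightarrow> (E ^^ gdist E x y) x y"
  unfolding gdist_def using connected rtranclp_power by (metis LeastI_ex)

lemma gdist_aut: "graph_aut V E f \<Longrightarrow> x \<in> V \<Longrightarrow> y \<in> V \<Longrightarrow> gdist E (f x) (f y) = gdist E x y"
  using gdist_le gdist_relpowp aut_relpowp aut_relpowp_rev aut_in_V by (metis le_antisym)

lemma gdist_triangle: "x \<in> V \<Longrightarrow> y \<in> V \<Longrightarrow> z \<in> V \<Longrightarrow> gdist E x z \<le> gdist E x y + gdist E y z"
  using gdist_relpowp gdist_le relpowp_trans by metis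

lemma gdist_edge: "E x y \<Longrightarrow> gdist E x y \<le> 1"
  by (rule gdist_le) (simp only: relpowp_1)

lemma gdist_eq_0: "x \<in> V \<Longrightarrow> y \<in> V \<Longrightarrow> gdist E x y = 0 \<Longrightarrow> x = y"
  using gdist_relpowp by fastforce

lemma relpowp_crosses_class:
  "(E ^^ m) x w \<Longrightarrow> \<not> same_side F x w \<Longrightarrow>
     \<exists>p q a b. p + 1 + q = m \<and> (E ^^ p) x a \<and> {a, b} \<in> F \<and> (E ^^ q) b w"
proof (induction m arbitrary: x)
  case 0
  then show ?case by simp
next
  case (Suc m)
  then obtain x1 where x1: "E x x1" "(E ^^ m) x1 w" using relpowp_Suc_D2 by metis
  show ?case
  proof (cases "{x, x1} \<in> F")
    case True
    then show ?thesis using x1 by (intro exI[of _ 0] exI[of _ m]) auto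
  next
    case False
    then have "\<not> same_side F x1 w"
      using Suc.prems(2) same_side_edge[OF x1(1)] same_side_trans by blast
    then obtain p q a b where "p + 1 + q = m" "(E ^^ p) x1 a" "{a, b} \<in> F" "(E ^^ q) b w"
      using Suc.IH x1 by blast
    then show ?thesis using x1 relpowp_Suc_I2[of E x x1 p a]
      by (intro exI[of _ "Suc p"] exI[of _ q]) auto
  qed
qed

abbreviation sep :: "'a set set \<Rightarrow> 'a \<Rightarrow> 'a \<Rightarrow> nat" where
  "sep F u w \<equiv> of_bool (\<not> same_side F u w)"

definition sep_number :: "'a \<Rightarrow> 'a \<Rightarrow> nat" where
  "sep_number u w = (\<Sum>F\<in>P. sep F u w)"

lemma sep_other_class:
  assumes "F \<in> P" "E u v" "F \<noteq> edge_class u v"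
  shows "sep F u w = sep F v w"
proof -
  have "same_side F u v" using same_side_other_class[OF assms] .
  then have "same_side F u w \<longleftrightarrow> same_side F v w" by (meson same_side_sym same_side_trans)
  then show ?thesis by simp
qed

lemma sep_class_edge:
  assumes F: "F \<in> P" and ab: "{a, b} \<in> F" and w: "w \<in> V"
  shows "sep F a w + sep F b w = 1"
proof -
  have V: "a \<in> V" "b \<in> V" using class_edge[OF F ab] edge_in_V by auto
  have apart: "\<not> same_side F a b" by (rule class_edge_separates[OF F ab])
  show ?thesis
  proof (cases "same_side F a w")
    case True
    then have "\<not> same_side F b w" using apart same_side_sym same_side_trans by blast
    with True show ?thesis by simp
  next
    case False
    then have "same_side F b w" using apart not_same_side_trans[OF F V w] by blast
    with False show ?thesis by simp
  qed
qed

lemma sep_number_edge: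
  assumes "E u v"
  shows "sep_number u w + sep (edge_class u v) v w = sep_number v w + sep (edge_class u v) u w"
proof -
  define H where "H = edge_class u v"
  have H: "H \<in> P" using edge_class[OF assms] H_def by simp
  have rest: "(\<Sum>F\<in>P - {H}. sep F u w) = (\<Sum>F\<in>P - {H}. sep F v w)"
    using sep_other_class[OF _ assms] H_def by (intro sum.cong) auto
  show ?thesis
    unfolding sep_number_def H_def[symmetric]
    using sum.remove[OF finite_classes H, of "\<lambda>F. sep F u w"]
      sum.remove[OF finite_classes H, of "\<lambda>F. sep F v w"] rest
    by simp
qed

lemma sep_number_le_relpowp: "(E ^^ n) u w \<Longrightarrow> sep_number u w \<le> n"
proof (induction n arbitrary: u)
  case 0
  then show ?case by (simp add: sep_number_def)
next
  case (Suc n)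
  then obtain v where v: "E u v" "(E ^^ n) v w" using relpowp_Suc_D2 by metis
  have "sep (edge_class u v) u w \<le> 1" by simp
  then show ?case using sep_number_edge[OF v(1), of w] Suc.IH[OF v(2)] by linarith
qed

text \<open>Reflecting the part of a walk before its first \<open>F\<close>-edge shortens it: hence the
  first edge of a geodesic from \<open>u\<close> to \<open>w\<close> lies in a class separating \<open>u\<close> from \<open>w\<close>.\<close>

lemma gdist_le_sep_number: "u \<in> V \<Longrightarrow> w \<in> V \<Longrightarrow> gdist E u w \<le> sep_number u w"
proof (induction "gdist E u w" arbitrary: u rule: less_induct)
  case less
  show ?case
  proof (cases "gdist E u w")
    case 0
    then show ?thesis by simp
  next
    case (Suc m)
    then obtain v where v: "E u v" "(E ^^ m) v w"
      using gdist_relpowp[OF less.prems] relpowp_Suc_D2 by metis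
    define H where "H = edge_class u v"
    have H: "H \<in> P" "{u, v} \<in> H" "{v, u} \<in> H"
      using edge_class[OF v(1)] H_def by (auto simp: insert_commute)
    have vV: "v \<in> V" using edge_in_V v(1) by blast
    have separated: "\<not> same_side H u w"
    proof
      assume "same_side H u w"
      then have "\<not> same_side H v w"
        using class_edge_separates[OF H(1,2)] same_side_sym same_side_trans by blast
      then obtain p q a b where pq: "p + 1 + q = m" "(E ^^ p) v a" "{a, b} \<in> H" "(E ^^ q) b w"
        using relpowp_crosses_class[OF v(2)] by blast
      have "reflection H v = u" "reflection H a = b"
        using reflection_swap[OF H(1)] H(3) pq(3) by auto
      then have "(E ^^ p) u b" using aut_relpowp[OF reflection(1)[OF H(1)] pq(2)] by simp
      then have "gdist E u w \<le> p + q" using pq(4) by (metis relpowp_trans gdist_le)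
      then show False using Suc pq(1) by simp
    qed
    have "gdist E v w < gdist E u w" using gdist_le[OF v(2)] Suc by simp
    then have "gdist E v w \<le> sep_number v w" using less.hyps vV less.prems(2) by blast
    moreover have "gdist E u w \<le> Suc (gdist E v w)"
      using gdist_le relpowp_Suc_I2[OF v(1) gdist_relpowp[OF vV less.prems(2)]] by blast
    moreover have "sep H u w + sep H v w = 1" using sep_class_edge[OF H(1,2) less.prems(2)] .
    ultimately show ?thesis using sep_number_edge[OF v(1), of w] separated H_def by simp
  qed
qed

lemma gdist_eq_sep_number: "u \<in> V \<Longrightarrow> w \<in> V \<Longrightarrow> gdist E u w = sep_number u w"
  using gdist_le_sep_number sep_number_le_relpowp[OF gdist_relpowp] by (meson le_antisym)


lemma sep_sym: "sep F u w = sep F w u"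
proof -
  have "same_side F u w \<longleftrightarrow> same_side F w u" using same_side_sym by blast
  then show ?thesis by simp
qed

lemma gdist_cross_sum:
  assumes "a \<in> V" "b \<in> V" "x \<in> V" "y \<in> V"
  shows "gdist E a x + gdist E b y = (\<Sum>F\<in>P. sep F a x + sep F b y)"
  using assms by (simp add: gdist_eq_sep_number sep_number_def sum.distrib)

lemma gdist_cross_ne:
  assumes H: "H \<in> P" and ab: "{a, b} \<in> H" and xy: "x \<in> V" "y \<in> V" "\<not> same_side H x y"
  shows "gdist E a x + gdist E b y \<noteq> gdist E a y + gdist E b x"
proof -
  have ab': "E a b" "a \<in> V" "b \<in> V" using class_edge[OF H ab] edge_in_V by auto
  have other: "sep F a t = sep F b t" if "F \<in> P - {H}" for F t
  proof -
    have "F \<in> P" "F \<noteq> edge_class a b" using that edge_class_eq[OF H ab] by auto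
    then show ?thesis using sep_other_class[OF _ ab'(1)] by blast
  qed
  have rest: "(\<Sum>F\<in>P - {H}. sep F a x + sep F b y) = (\<Sum>F\<in>P - {H}. sep F a y + sep F b x)"
    using other by (intro sum.cong) auto
  have "same_side H a x \<noteq> same_side H a y"
  proof
    assume eq: "same_side H a x = same_side H a y"
    show False
    proof (cases "same_side H a x")
      case True
      then show False using eq xy(3) same_side_sym same_side_trans by blast
    next
      case False
      then show False using eq xy not_same_side_trans[OF H xy(1,2) ab'(2)] same_side_sym by blast
    qed
  qed
  then have "sep H a x \<noteq> sep H a y" by simp
  then have "sep H a x + sep H b y \<noteq> sep H a y + sep H b x"
    using sep_class_edge[OF H ab xy(1)] sep_class_edge[OF H ab xy(2)] by simp
  then show ?thesis
    unfolding gdist_cross_sum[OF ab'(2,3) xy(1,2)] gdist_cross_sum[OF ab'(2,3) xy(2,1)]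
    using sum.remove[OF finite_classes H, of "\<lambda>F. sep F a x + sep F b y"]
      sum.remove[OF finite_classes H, of "\<lambda>F. sep F a y + sep F b x"] rest
    by simp
qed

lemma gdist_cross_eq:
  assumes ab: "E a b" and xy: "E x y" and ne: "edge_class a b \<noteq> edge_class x y"
  shows "gdist E a x + gdist E b y = gdist E a y + gdist E b x"
proof -
  have V: "a \<in> V" "b \<in> V" "x \<in> V" "y \<in> V" using ab xy edge_in_V by auto
  have "sep F a x + sep F b y = sep F a y + sep F b x" if "F \<in> P" for F
  proof (cases "F = edge_class a b")
    case False
    then show ?thesis using sep_other_class[OF that ab] by simp
  next
    case True
    then have "sep F x t = sep F y t" for t using sep_other_class[OF that xy] ne by simp
    then show ?thesis using sep_sym by metis
  qed
  then show ?thesis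
    unfolding gdist_cross_sum[OF V] gdist_cross_sum[OF V(1,2,4,3)] by (rule sum.cong[OF refl])
qed

theorem Theta_iff_edge_class:
  assumes ab: "E a b" and xy: "E x y"
  shows "Theta E a b x y \<longleftrightarrow> edge_class a b = edge_class x y"
proof
  assume "Theta E a b x y"
  then show "edge_class a b = edge_class x y"
    using gdist_cross_eq[OF ab xy] unfolding Theta_def by blast
next
  assume same: "edge_class a b = edge_class x y"
  have "{x, y} \<in> edge_class a b" using edge_class(2)[OF xy] same by simp
  then have "\<not> same_side (edge_class a b) x y"
    by (rule class_edge_separates[OF edge_class(1)[OF ab]])
  then show "Theta E a b x y"
    using gdist_cross_ne[OF edge_class[OF ab]] edge_in_V ab xy unfolding Theta_def by blast
qed

lemma class_eq_if_same_cut: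
  assumes F: "F \<in> P" and H: "H \<in> P" and u: "u \<in> V" and x: "x \<in> V"
    and cut: "side F u = side H x \<or> side F u = V - side H x"
  shows "F = H"
proof -
  obtain p q where pq: "{p, q} \<in> F" using class_has_edge F by blast
  have V: "p \<in> V" "q \<in> V" using class_edge[OF F pq] edge_in_V by auto
  have "sep F u p + sep F u q = 1" using sep_class_edge[OF F pq u] sep_sym by metis
  then have "(p \<in> side F u) \<noteq> (q \<in> side F u)" using V by (auto simp: side_def)
  then have "(p \<in> side H x) \<noteq> (q \<in> side H x)" using cut V by blast
  moreover have "(p \<in> side H x) = (q \<in> side H x)" if "same_side H p q"
    using that V same_side_sym same_side_trans unfolding side_def by blast
  ultimately have "\<not> same_side H p q" by blast
  then have "{p, q} \<in> H" using same_side_edge class_edge[OF F pq] by blast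
  then show ?thesis using class_unique F H pq by blast
qed

text \<open>Since both sides of a class have half of the vertices, two different classes cut
  each other: every side of the one meets both sides of the other.\<close>

lemma sides_of_distinct_classes_meet:
  assumes F: "F \<in> P" and H: "H \<in> P" and ne: "F \<noteq> H" and u: "u \<in> V" and x: "x \<in> V"
  shows "side F u \<inter> side H x \<noteq> {}" "side F u - side H x \<noteq> {}"
proof -
  have card: "card (side F u) = card (side H x)" using card_side[OF F u] card_side[OF H x] by simp
  have finite: "finite (side F u)" "finite (side H x)"
    using finite_V side_subset finite_subset by metis+
  show "side F u \<inter> side H x \<noteq> {}"
  proof
    assume "side F u \<inter> side H x = {}"
    then have sub: "side F u \<subseteq> V - side H x" using side_subset by blast
    have "card (V - side H x) = card V - card (side H x)"
      using finite(2) side_subset by (simp add: card_Diff_subset)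
    then have "card (side F u) = card (V - side H x)" using card card_side[OF H x] by simp
    then have "side F u = V - side H x" using card_subset_eq[OF _ sub] finite_V by blast
    then show False using class_eq_if_same_cut[OF F H u x] ne by blast
  qed
  show "side F u - side H x \<noteq> {}"
  proof
    assume "side F u - side H x = {}"
    then have "side F u = side H x" using card card_subset_eq finite(2) by blast
    then show False using class_eq_if_same_cut[OF F H u x] ne by blast
  qed
qed

lemma class_edge_within_side:
  assumes F: "F \<in> P" and H: "H \<in> P" and ne: "F \<noteq> H" and u: "u \<in> V"
  obtains z z' where "{z, z'} \<in> H" "same_side F u z" "same_side F u z'"
proof -
  obtain z1 z2 where z1: "same_side F u z1" "same_side H u z1"
    and z2: "same_side F u z2" "\<not> same_side H u z2"
    using sides_of_distinct_classes_meet[OF F H ne u u] unfolding side_def by blast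
  have "same_side F z1 z2" using z1(1) z2(1) same_side_sym same_side_trans by blast
  moreover have "\<not> same_side H z1 z2" using z1(2) z2(2) same_side_trans by blast
  ultimately have "\<exists>z z'. same_side F z1 z \<and> remove_edges E F z z' \<and> \<not> same_side H z z'"
    unfolding same_side_def by (rule rtranclp_leaves_rtranclp)
  then obtain z z' where zz': "same_side F z1 z" "remove_edges E F z z'" "\<not> same_side H z z'"
    by blast
  then have "E z z'" by (simp add: remove_edges_def)
  then have "{z, z'} \<in> H" using zz'(3) same_side_edge by blast
  moreover have "same_side F u z" using z1(1) zz'(1) same_side_trans by blast
  moreover have "same_side F u z'"
    using \<open>same_side F u z\<close> zz'(2) unfolding same_side_def by (rule rtranclp.rtrancl_into_rtrancl)
  ultimately show thesis by (rule that)
qed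

text \<open>A geodesic from \<open>z\<close> to \<open>g2 u\<close> crosses \<open>F\<close> at some edge \<open>ab\<close>; both \<open>g1\<close> and
  \<open>g2\<close> map \<open>a\<close> to \<open>b\<close>, so \<open>b\<close> is as far from \<open>g1 u\<close> as from \<open>g2 u\<close>.\<close>

lemma gdist_image_le:
  assumes F: "F \<in> P" and g1: "graph_aut V E g1" "swaps_edges g1 F"
    and g2: "graph_aut V E g2" "swaps_edges g2 F" and u: "u \<in> V" and z: "same_side F u z"
  shows "gdist E z (g1 u) \<le> gdist E z (g2 u)"
proof -
  have zV: "z \<in> V" using same_side_in_V z u by blast
  have gu: "g1 u \<in> V" "g2 u \<in> V" using aut_in_V g1 g2 u by auto
  have "\<not> same_side F z (g2 u)"
    using z aut_swapping_class_crosses[OF F g2 u] same_side_trans by blast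
  then obtain p q a b where pq: "p + 1 + q = gdist E z (g2 u)" "(E ^^ p) z a" "{a, b} \<in> F"
    "(E ^^ q) b (g2 u)"
    using relpowp_crosses_class[OF gdist_relpowp[OF zV gu(2)]] by blast
  have ab: "E a b" "a \<in> V" "b \<in> V" using class_edge[OF F pq(3)] edge_in_V by auto
  have "g1 a = b" "g2 a = b" using g1(2) g2(2) pq(3) unfolding swaps_edges_def by auto
  then have "gdist E b (g1 u) = gdist E b (g2 u)"
    using gdist_aut[OF g1(1) ab(2) u] gdist_aut[OF g2(1) ab(2) u] by simp
  also have "\<dots> \<le> q" using pq(4) by (rule gdist_le)
  finally have "gdist E b (g1 u) \<le> q" .
  moreover have "gdist E z a \<le> p" "gdist E a b \<le> 1" using gdist_le[OF pq(2)] gdist_edge[OF ab(1)] .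
  moreover have "gdist E z (g1 u) \<le> gdist E z a + gdist E a b + gdist E b (g1 u)"
    using gdist_triangle[OF zV ab(2) gu(1)] gdist_triangle[OF ab(2,3) gu(1)] by simp
  ultimately show ?thesis using pq(1) by simp
qed

text \<open>Two automorphisms swapping \<open>F\<close> send \<open>u\<close> to vertices \<open>w1\<close>, \<open>w2\<close> at the same
  distance from every vertex on the side of \<open>u\<close>. A class separating \<open>w1\<close> from \<open>w2\<close> would
  have an edge on that side, whose endpoints would see \<open>w1\<close> and \<open>w2\<close> differently.\<close>

theorem reflection_unique:
  assumes F: "F \<in> P" and g: "graph_aut V E g" "swaps_edges g F"
  shows "g = reflection F"
proof (rule extensionalityI)
  show "g \<in> extensional V" "reflection F \<in> extensional V"
    using g(1) reflection(1)[OF F] unfolding graph_aut_def Bij_def by auto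
  fix u assume u: "u \<in> V"
  have r: "graph_aut V E (reflection F)" "swaps_edges (reflection F) F" using reflection F by auto
  define w1 w2 where "w1 = reflection F u" and "w2 = g u"
  have wV: "w1 \<in> V" "w2 \<in> V" using aut_in_V r g u w1_def w2_def by auto
  have equidistant: "gdist E z w1 = gdist E z w2" if "same_side F u z" for z
    using gdist_image_le[OF F r g u that] gdist_image_le[OF F g r u that] w1_def w2_def by simp
  show "g u = reflection F u"
  proof (rule ccontr)
    assume "g u \<noteq> reflection F u"
    then have "w1 \<noteq> w2" using w1_def w2_def by simp
    then have "gdist E w1 w2 \<noteq> 0" using gdist_eq_0[OF wV] by blast
    then have "(\<Sum>H\<in>P. sep H w1 w2) \<noteq> 0"
      using gdist_eq_sep_number[OF wV] by (simp add: sep_number_def)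
    then have "\<not> (\<forall>H\<in>P. sep H w1 w2 = 0)" by (rule contrapos_nn) (rule sum.neutral)
    then obtain H where H: "H \<in> P" "\<not> same_side H w1 w2" by auto
    have "\<not> same_side F w1 u" "\<not> same_side F w2 u"
      using aut_swapping_class_crosses[OF F r u] aut_swapping_class_crosses[OF F g u]
        same_side_sym w1_def w2_def by blast+
    then have "same_side F w1 w2" using not_same_side_trans[OF F wV u] by blast
    then have "F \<noteq> H" using H(2) by blast
    then obtain z z' where zz': "{z, z'} \<in> H" "same_side F u z" "same_side F u z'"
      using class_edge_within_side[OF F H(1) _ u] by blast
    have "gdist E z w1 + gdist E z' w2 \<noteq> gdist E z w2 + gdist E z' w1"
      by (rule gdist_cross_ne[OF H(1) zz'(1) wV H(2)])
    then show False using equidistant zz'(2,3) by simp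
  qed
qed

sublocale Sym: group "BijGroup V"
  by (rule group_BijGroup)

lemma graph_aut_carrier: "graph_aut V E f \<Longrightarrow> f \<in> carrier (BijGroup V)"
  by (simp add: graph_aut_def carrier_BijGroup)

lemma graph_aut_inv: "graph_aut V E f \<Longrightarrow> graph_aut V E (inv\<^bsub>BijGroup V\<^esub> f)"
  using subgroup.m_inv_closed[OF subgroup_graph_aut] by blast

lemma graph_aut_mult: "graph_aut V E f \<Longrightarrow> graph_aut V E g \<Longrightarrow> graph_aut V E (f \<otimes>\<^bsub>BijGroup V\<^esub> g)"
  using subgroup.m_closed[OF subgroup_graph_aut] by blast

lemma mirror_aut_eq_reflection:
  assumes xy: "E x y"
  shows "mirror_aut V E x y = reflection (edge_class x y)"
  unfolding mirror_aut_def
proof (rule the_equality)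
  define F where "F = edge_class x y"
  have F: "F \<in> P" "{x, y} \<in> F" using edge_class[OF xy] F_def by auto
  have class_iff: "Theta E a b x y \<longleftrightarrow> E a b \<and> {a, b} \<in> F" for a b
    using Theta_iff_edge_class[OF _ xy] edge_class_eq[OF F(1)] edge_class[of a b] class_edge[OF F(1)]
    unfolding F_def Theta_def by metis
  show "graph_aut V E (reflection (edge_class x y)) \<and>
      (\<forall>a b. Theta E a b x y \<longrightarrow> reflection (edge_class x y) a = b \<and> reflection (edge_class x y) b = a)"
    using reflection(1)[OF F(1)] reflection_swap[OF F(1)] class_iff F_def by (auto simp: insert_commute)
  fix \<beta> assume \<beta>: "graph_aut V E \<beta> \<and> (\<forall>a b. Theta E a b x y \<longrightarrow> \<beta> a = b \<and> \<beta> b = a)"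
  then have "swaps_edges \<beta> F"
    unfolding swaps_edges_def using class_iff class_edge[OF F(1)] by blast
  then show "\<beta> = reflection (edge_class x y)" using reflection_unique F(1) \<beta> F_def by blast
qed

lemma mirror_aut:
  assumes "E x y"
  shows "graph_aut V E (mirror_aut V E x y)" "mirror_aut V E x y x = y" "mirror_aut V E x y y = x"
    "mirror_aut V E y x = mirror_aut V E x y"
  using mirror_aut_eq_reflection[OF assms] mirror_aut_eq_reflection[OF edge_sym[OF assms]]
    reflection(1) reflection_swap edge_class[OF assms] edge_class_sym
  by (auto simp: insert_commute)

lemma mirror_aut_Theta: "E x y \<Longrightarrow> Theta E a b x y \<Longrightarrow> mirror_aut V E x y a = b"
  using mirror_aut_eq_reflection reflection_swap Theta_iff_edge_class edge_class
  unfolding Theta_def by metis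

lemma mirror_aut_carrier: "E x y \<Longrightarrow> mirror_aut V E x y \<in> carrier (BijGroup V)"
  using mirror_aut(1) graph_aut_carrier by blast

lemma reflection_involution:
  assumes F: "F \<in> P"
  shows "inv\<^bsub>BijGroup V\<^esub> (reflection F) = reflection F"
proof (rule reflection_unique[OF F])
  have r: "graph_aut V E (reflection F)" by (rule reflection(1)[OF F])
  then show "graph_aut V E (inv\<^bsub>BijGroup V\<^esub> (reflection F))" by (rule graph_aut_inv)
  show "swaps_edges (inv\<^bsub>BijGroup V\<^esub> (reflection F)) F"
    unfolding swaps_edges_def
  proof (intro allI impI)
    fix a b assume ab: "{a, b} \<in> F"
    then have "reflection F b = a" using reflection_swap[OF F] by (simp add: insert_commute)
    moreover have "b \<in> V" using class_edge[OF F ab] edge_in_V by blast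
    ultimately show "(inv\<^bsub>BijGroup V\<^esub> (reflection F)) a = b"
      using BijGroup_inv_apply(2) graph_aut_carrier[OF r] by metis
  qed
qed

lemma mirror_aut_involution: "E x y \<Longrightarrow> inv\<^bsub>BijGroup V\<^esub> (mirror_aut V E x y) = mirror_aut V E x y"
  using mirror_aut_eq_reflection reflection_involution edge_class(1) by simp

lemma Theta_aut:
  assumes f: "graph_aut V E f" and ab: "E a b" and xy: "E x y"
  shows "Theta E (f a) (f b) (f x) (f y) \<longleftrightarrow> Theta E a b x y"
  using ab xy aut_edge[OF f] gdist_aut[OF f] edge_in_V unfolding Theta_def by auto

lemma mirror_aut_conj:
  assumes f: "graph_aut V E f" and xy: "E x y"
  shows "mirror_aut V E (f x) (f y) =
    f \<otimes>\<^bsub>BijGroup V\<^esub> mirror_aut V E x y \<otimes>\<^bsub>BijGroup V\<^esub> inv\<^bsub>BijGroup V\<^esub> f"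
proof -
  let ?m = "mirror_aut V E x y" and ?f' = "inv\<^bsub>BijGroup V\<^esub> f"
  define g where "g = f \<otimes>\<^bsub>BijGroup V\<^esub> ?m \<otimes>\<^bsub>BijGroup V\<^esub> ?f'"
  have fxy: "E (f x) (f y)" using aut_edge[OF f xy] .
  define F where "F = edge_class (f x) (f y)"
  have F: "F \<in> P" using edge_class(1)[OF fxy] F_def by simp
  have fB: "f \<in> carrier (BijGroup V)" and f'B: "?f' \<in> carrier (BijGroup V)"
    and mB: "?m \<in> carrier (BijGroup V)"
    using f graph_aut_inv[OF f] mirror_aut(1)[OF xy] by (simp_all add: graph_aut_carrier)
  have g: "graph_aut V E g"
    unfolding g_def using graph_aut_mult graph_aut_inv f mirror_aut(1)[OF xy] by blast
  have "swaps_edges g F" unfolding swaps_edges_def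
  proof (intro allI impI)
    fix a b assume ab: "{a, b} \<in> F"
    have Eab: "E a b" using class_edge[OF F ab] .
    then have abV: "a \<in> V" "b \<in> V" using edge_in_V by auto
    define a' b' where "a' = ?f' a" and "b' = ?f' b"
    have a'V: "a' \<in> V" "b' \<in> V"
      using f'B abV Bij_imp_funcset a'_def b'_def by (fastforce simp: carrier_BijGroup)+
    have fa: "f a' = a" "f b' = b" using BijGroup_inv_apply(1)[OF fB] abV a'_def b'_def by auto
    have Ea: "E a' b'" using f a'V Eab fa unfolding graph_aut_def by blast
    have "Theta E a b (f x) (f y)" using Theta_iff_edge_class[OF Eab fxy] edge_class_eq[OF F ab] F_def by simp
    then have "Theta E a' b' x y" using Theta_aut[OF f Ea xy] fa by simp
    then have "?m a' = b'" by (rule mirror_aut_Theta[OF xy])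
    moreover have "f \<otimes>\<^bsub>BijGroup V\<^esub> ?m \<in> carrier (BijGroup V)" using fB mB by (rule Sym.m_closed)
    then have "g a = f (?m a')"
      unfolding g_def a'_def
      using BijGroup_mult_apply[OF _ f'B abV(1)] BijGroup_mult_apply[OF fB mB a'V(1)] a'_def by simp
    ultimately show "g a = b" using fa by simp
  qed
  then have "g = reflection F" using reflection_unique[OF F g] by simp
  then show ?thesis using mirror_aut_eq_reflection[OF fxy] F_def g_def by simp
qed

lemma mirror_group_subgroup: "subgroup (mirror_group V E) (BijGroup V)"
  unfolding mirror_group_def mirror_auts_def
  by (rule Sym.generate_is_subgroup) (auto intro: mirror_aut_carrier)

lemma mirror_group_aut: "g \<in> mirror_group V E \<Longrightarrow> graph_aut V E g"
proof -
  have "mirror_auts V E \<subseteq> {f. graph_aut V E f}" unfolding mirror_auts_def using mirror_aut(1) by blast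
  then have "mirror_group V E \<subseteq> {f. graph_aut V E f}"
    unfolding mirror_group_def by (rule Sym.generate_subgroup_incl[OF _ subgroup_graph_aut])
  then show "g \<in> mirror_group V E \<Longrightarrow> graph_aut V E g" by blast
qed

lemma mirror_aut_in_group: "E x y \<Longrightarrow> mirror_aut V E x y \<in> mirror_group V E"
  unfolding mirror_group_def mirror_auts_def by (blast intro: generate.incl)

fun walk :: "'a list \<Rightarrow> bool" where
  "walk [] = False"
| "walk [x] = (x \<in> V)"
| "walk (x # y # zs) = (E x y \<and> walk (y # zs))"

fun walk_aut :: "'a list \<Rightarrow> 'a \<Rightarrow> 'a" where
  "walk_aut [] = \<one>\<^bsub>BijGroup V\<^esub>"
| "walk_aut [x] = \<one>\<^bsub>BijGroup V\<^esub>"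
| "walk_aut (x # y # zs) = walk_aut (y # zs) \<otimes>\<^bsub>BijGroup V\<^esub> mirror_aut V E x y"

lemma walk_nonempty: "walk W \<Longrightarrow> W \<noteq> []"
  by (cases W) auto

lemma walk_aut_in_group: "walk W \<Longrightarrow> walk_aut W \<in> mirror_group V E"
  by (induction W rule: walk_aut.induct)
    (auto intro: subgroup.one_closed[OF mirror_group_subgroup]
      subgroup.m_closed[OF mirror_group_subgroup] mirror_aut_in_group)

lemma walk_aut_carrier: "walk W \<Longrightarrow> walk_aut W \<in> carrier (BijGroup V)"
  using walk_aut_in_group subgroup.subset[OF mirror_group_subgroup] by blast

lemma walk_aut_apply: "walk W \<Longrightarrow> walk_aut W (hd W) = last W"
proof (induction W rule: walk_aut.induct)
  case 1
  then show ?case by simp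
next
  case (2 x)
  then show ?case using BijGroup_one_apply by simp
next
  case (3 x y zs)
  then have xy: "E x y" and w: "walk (y # zs)" by auto
  have "walk_aut (x # y # zs) x = walk_aut (y # zs) (mirror_aut V E x y x)"
    using BijGroup_mult_apply[OF walk_aut_carrier[OF w] mirror_aut_carrier[OF xy]] edge_in_V[OF xy]
    by simp
  then show ?case using mirror_aut(2)[OF xy] 3(1)[OF w] by simp
qed

lemma walk_append:
  "walk X \<Longrightarrow> walk Y \<Longrightarrow> last X = hd Y \<Longrightarrow>
     walk (X @ tl Y) \<and> walk_aut (X @ tl Y) = walk_aut Y \<otimes>\<^bsub>BijGroup V\<^esub> walk_aut X"
proof (induction X rule: walk_aut.induct)
  case 1
  then show ?case by simp
next
  case (2 x)
  then have "[x] @ tl Y = Y" using walk_nonempty by (cases Y) auto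
  then show ?case using 2 Sym.r_one[OF walk_aut_carrier[OF 2(2)]] by simp
next
  case (3 x y zs)
  then have xy: "E x y" and w: "walk (y # zs)" by auto
  have "walk_aut ((x # y # zs) @ tl Y) =
      (walk_aut Y \<otimes>\<^bsub>BijGroup V\<^esub> walk_aut (y # zs)) \<otimes>\<^bsub>BijGroup V\<^esub> mirror_aut V E x y"
    using 3 by simp
  then show ?case using 3 Sym.m_assoc walk_aut_carrier mirror_aut_carrier[OF xy] by auto
qed

lemma walk_append_edge:
  assumes X: "walk X" and Y: "walk Y" and e: "E (last X) (hd Y)"
  shows "walk (X @ Y)"
    "walk_aut (X @ Y) = walk_aut Y \<otimes>\<^bsub>BijGroup V\<^esub> mirror_aut V E (last X) (hd Y) \<otimes>\<^bsub>BijGroup V\<^esub> walk_aut X"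
proof -
  obtain b bs where Yb: "Y = b # bs" using walk_nonempty[OF Y] by (cases Y) auto
  have Y': "walk (last X # Y)" using Y e Yb by simp
  have "walk_aut (last X # Y) = walk_aut Y \<otimes>\<^bsub>BijGroup V\<^esub> mirror_aut V E (last X) (hd Y)"
    using Yb by simp
  then show "walk (X @ Y)"
    "walk_aut (X @ Y) = walk_aut Y \<otimes>\<^bsub>BijGroup V\<^esub> mirror_aut V E (last X) (hd Y) \<otimes>\<^bsub>BijGroup V\<^esub> walk_aut X"
    using walk_append[OF X Y'] by simp_all
qed

lemma walk_split:
  "walk (X @ Y) \<Longrightarrow> X \<noteq> [] \<Longrightarrow> Y \<noteq> [] \<Longrightarrow> walk X \<and> walk Y \<and> E (last X) (hd Y)"
proof (induction X rule: walk.induct)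
  case (2 x)
  then show ?case by (cases Y) (auto dest: edge_in_V)
qed auto

lemma walk_map:
  "graph_aut V E f \<Longrightarrow> walk W \<Longrightarrow> walk (map f W) \<and>
     walk_aut (map f W) = f \<otimes>\<^bsub>BijGroup V\<^esub> walk_aut W \<otimes>\<^bsub>BijGroup V\<^esub> inv\<^bsub>BijGroup V\<^esub> f"
proof (induction W rule: walk_aut.induct)
  case 1
  then show ?case by simp
next
  case (2 x)
  then show ?case using aut_in_V graph_aut_carrier by simp
next
  case (3 x y zs)
  then have xy: "E x y" and w: "walk (y # zs)" and f: "f \<in> carrier (BijGroup V)"
    using graph_aut_carrier by auto
  have IH: "walk (map f (y # zs))"
    "walk_aut (map f (y # zs)) =
      f \<otimes>\<^bsub>BijGroup V\<^esub> walk_aut (y # zs) \<otimes>\<^bsub>BijGroup V\<^esub> inv\<^bsub>BijGroup V\<^esub> f"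
    using 3(1)[OF 3(2) w] by auto
  show ?case
    using IH aut_edge[OF 3(2) xy] mirror_aut_conj[OF 3(2) xy]
      Sym.conj_mult[OF f walk_aut_carrier[OF w] mirror_aut_carrier[OF xy]]
    by simp
qed

lemma walk_rev: "walk W \<Longrightarrow> walk (rev W) \<and> walk_aut (rev W) = inv\<^bsub>BijGroup V\<^esub> (walk_aut W)"
proof (induction W rule: walk_aut.induct)
  case 1
  then show ?case by simp
next
  case (2 x)
  then show ?case by simp
next
  case (3 x y zs)
  then have xy: "E x y" and w: "walk (y # zs)" by auto
  have IH: "walk (rev (y # zs))" "walk_aut (rev (y # zs)) = inv\<^bsub>BijGroup V\<^esub> (walk_aut (y # zs))"
    using 3(1)[OF w] by auto
  have "rev (x # y # zs) = rev (y # zs) @ [x]" by simp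
  moreover have "walk [x]" "last (rev (y # zs)) = y" using edge_in_V[OF xy] by simp_all
  ultimately show ?case
    using walk_append_edge[OF IH(1), of "[x]"] IH(2) edge_sym[OF xy] mirror_aut(4)[OF xy]
      mirror_aut_involution[OF xy] Sym.inv_mult_group[OF walk_aut_carrier[OF w] mirror_aut_carrier[OF xy]]
      Sym.l_one[OF mirror_aut_carrier[OF xy]]
    by simp
qed

lemma walk_exists: "E\<^sup>*\<^sup>* x y \<Longrightarrow> x \<in> V \<Longrightarrow> \<exists>W. walk W \<and> hd W = x \<and> last W = y"
proof (induction rule: rtranclp_induct)
  case base
  then show ?case by (intro exI[of _ "[x]"]) simp
next
  case (step y z)
  then obtain W where W: "walk W" "hd W = x" "last W = y" by blast
  have "walk [z]" using edge_in_V step(2) by simp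
  then have "walk (W @ [z])" using walk_append_edge(1)[OF W(1)] W(3) step(2) by simp
  then show ?case using W walk_nonempty[OF W(1)] by (intro exI[of _ "W @ [z]"]) simp
qed

lemma walk_crosses_class:
  "walk W \<Longrightarrow> \<not> same_side F (hd W) (last W) \<Longrightarrow>
     \<exists>W1 W2. W = W1 @ W2 \<and> W1 \<noteq> [] \<and> W2 \<noteq> [] \<and> {last W1, hd W2} \<in> F"
proof (induction W rule: walk.induct)
  case (3 x y zs)
  show ?case
  proof (cases "{x, y} \<in> F")
    case True
    then show ?thesis by (intro exI[of _ "[x]"] exI[of _ "y # zs"]) simp
  next
    case False
    then have "same_side F x y" using 3(2) same_side_edge by simp
    then have "\<not> same_side F (hd (y # zs)) (last (y # zs))"
      using 3(3) same_side_trans by (metis last_ConsR list.discI list.sel(1))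
    then obtain W1 W2 where "y # zs = W1 @ W2" "W1 \<noteq> []" "W2 \<noteq> []" "{last W1, hd W2} \<in> F"
      using 3 by auto
    then show ?thesis by (intro exI[of _ "x # W1"] exI[of _ W2]) simp
  qed
qed auto

lemma walk_reflect_prefix:
  assumes F: "F \<in> P" and W: "walk (W1 @ W2)" "W1 \<noteq> []" "W2 \<noteq> []" and e: "{last W1, hd W2} \<in> F"
  shows "walk (map (reflection F) W1 @ tl W2)"
    "walk_aut (map (reflection F) W1 @ tl W2) = walk_aut (W1 @ W2) \<otimes>\<^bsub>BijGroup V\<^esub> reflection F"
proof -
  let ?a = "reflection F" and ?M = "map (reflection F) W1"
  have ws: "walk W1" "walk W2" "E (last W1) (hd W2)" using walk_split[OF W] by auto
  have a: "graph_aut V E ?a" "?a \<in> carrier (BijGroup V)" "inv\<^bsub>BijGroup V\<^esub> ?a = ?a"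
    using reflection(1)[OF F] graph_aut_carrier reflection_involution[OF F] by auto
  have m: "mirror_aut V E (last W1) (hd W2) = ?a"
    using mirror_aut_eq_reflection[OF ws(3)] edge_class_eq[OF F e] by simp
  have M: "walk ?M" "walk_aut ?M = ?a \<otimes>\<^bsub>BijGroup V\<^esub> walk_aut W1 \<otimes>\<^bsub>BijGroup V\<^esub> ?a"
    using walk_map[OF a(1) ws(1)] a(3) by auto
  have "last ?M = hd W2" using reflection_swap[OF F e] W(2) by (simp add: last_map)
  then show "walk (?M @ tl W2)"
    "walk_aut (?M @ tl W2) = walk_aut (W1 @ W2) \<otimes>\<^bsub>BijGroup V\<^esub> ?a"
    using walk_append[OF M(1) ws(2)] M(2) walk_append_edge(2)[OF ws] m a(2)
      walk_aut_carrier[OF ws(1)] walk_aut_carrier[OF ws(2)]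
    by (simp_all add: Sym.m_assoc)
qed

text \<open>A closed walk is shortened by two edges, without changing its product, by reflecting
  its part between its first edge and the first later edge of the same class.\<close>

lemma closed_walk_aut: "walk W \<Longrightarrow> hd W = last W \<Longrightarrow> walk_aut W = \<one>\<^bsub>BijGroup V\<^esub>"
proof (induction "length W" arbitrary: W rule: less_induct)
  case less
  show ?case
  proof (cases W rule: walk_aut.cases)
    case (3 x y rest)
    have xy: "E x y" and walk_y: "walk (y # rest)" and last_y: "last (y # rest) = x"
      using less.prems 3 by auto
    define F where "F = edge_class x y"
    have F: "F \<in> P" "{y, x} \<in> F" using edge_class[OF xy] F_def by (auto simp: insert_commute)
    then have "\<not> same_side F (hd (y # rest)) (last (y # rest))"
      using class_edge_separates last_y by simp
    then obtain W1 W2 where split: "y # rest = W1 @ W2" "W1 \<noteq> []" "W2 \<noteq> []" "{last W1, hd W2} \<in> F"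
      using walk_crosses_class[OF walk_y] by blast
    have "walk_aut W = walk_aut (y # rest) \<otimes>\<^bsub>BijGroup V\<^esub> mirror_aut V E x y" using 3 by simp
    also have "\<dots> = walk_aut (W1 @ W2) \<otimes>\<^bsub>BijGroup V\<^esub> reflection F"
      using split(1) mirror_aut_eq_reflection[OF xy] F_def by simp
    finally have product: "walk_aut W = walk_aut (W1 @ W2) \<otimes>\<^bsub>BijGroup V\<^esub> reflection F" .
    define W' where "W' = map (reflection F) W1 @ tl W2"
    have W': "walk W'" "walk_aut W' = walk_aut W"
      using walk_reflect_prefix[OF F(1) _ split(2-4)] walk_y split(1) product W'_def by simp_all
    have "hd W1 = y" using split(1,2) by (cases W1) auto
    then have "hd W' = x" using reflection_swap[OF F(1,2)] split(2) W'_def by (simp add: hd_map)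
    moreover have "last W' = x"
    proof -
      have "last W2 = x" using split(1,3) last_y by simp
      moreover have "last (map (reflection F) W1) = hd W2"
        using reflection_swap[OF F(1) split(4)] split(2) by (simp add: last_map)
      ultimately show ?thesis using split(3) W'_def by (cases W2 rule: list.exhaust) auto
    qed
    moreover have "length W' < length W" using 3 split(1) W'_def by simp
    ultimately show ?thesis using less.hyps W' by metis
  qed simp_all
qed

text \<open>Walk from \<open>v\<close> to \<open>a\<close>, cross the edge \<open>ab\<close>, and walk back along the mirror image
  of the first part: the product is \<open>h (h w)\<^sup>-\<^sup>1 h w = h\<close> for \<open>h\<close> the mirror automorphism
  of \<open>ab\<close> and \<open>w\<close> the product of the first part.\<close>

lemma mirror_aut_walk:
  assumes ab: "E a b" and v: "v \<in> V"
  shows "\<exists>W. walk W \<and> hd W = v \<and> walk_aut W = mirror_aut V E a b"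
proof -
  let ?h = "mirror_aut V E a b"
  have h: "graph_aut V E ?h" "?h \<in> carrier (BijGroup V)" "inv\<^bsub>BijGroup V\<^esub> ?h = ?h"
    using mirror_aut(1)[OF ab] mirror_aut_carrier[OF ab] mirror_aut_involution[OF ab] by auto
  obtain W1 where W1: "walk W1" "hd W1 = v" "last W1 = a"
    using walk_exists connected v edge_in_V[OF ab] by blast
  have hh: "?h \<otimes>\<^bsub>BijGroup V\<^esub> (?h \<otimes>\<^bsub>BijGroup V\<^esub> c) = c" if "c \<in> carrier (BijGroup V)" for c
    using Sym.r_inv[OF h(2)] h(2,3) that by (simp add: Sym.m_assoc[symmetric])
  define R where "R = rev (map ?h W1)"
  have w1: "walk_aut W1 \<in> carrier (BijGroup V)" using walk_aut_carrier[OF W1(1)] .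
  have R: "walk R"
    "walk_aut R = inv\<^bsub>BijGroup V\<^esub> (?h \<otimes>\<^bsub>BijGroup V\<^esub> walk_aut W1 \<otimes>\<^bsub>BijGroup V\<^esub> ?h)"
    using walk_rev walk_map[OF h(1) W1(1)] h(3) R_def by auto
  have "hd R = b" using W1(3) walk_nonempty[OF W1(1)] mirror_aut(2)[OF ab] R_def
    by (simp add: hd_rev last_map)
  then have "walk (W1 @ R)"
    "walk_aut (W1 @ R) = walk_aut R \<otimes>\<^bsub>BijGroup V\<^esub> ?h \<otimes>\<^bsub>BijGroup V\<^esub> walk_aut W1"
    using walk_append_edge[OF W1(1) R(1)] W1(3) ab by simp_all
  moreover have "walk_aut R \<otimes>\<^bsub>BijGroup V\<^esub> ?h \<otimes>\<^bsub>BijGroup V\<^esub> walk_aut W1 = ?h"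
    using R(2) h w1 hh by (simp add: Sym.inv_mult_group Sym.m_assoc)
  ultimately show ?thesis using W1(2) walk_nonempty[OF W1(1)] by (intro exI[of _ "W1 @ R"]) simp
qed

lemma mirror_group_walk:
  assumes "g \<in> mirror_group V E" and v: "v \<in> V"
  shows "\<exists>W. walk W \<and> hd W = v \<and> walk_aut W = g"
  using assms(1) unfolding mirror_group_def
proof (induction rule: generate.induct)
  case one
  then show ?case using v by (intro exI[of _ "[v]"]) simp
next
  case (incl h)
  then show ?case using mirror_aut_walk v unfolding mirror_auts_def by blast
next
  case (inv h)
  then show ?case using mirror_aut_walk v mirror_aut_involution unfolding mirror_auts_def by force
next
  case (eng h1 h2)
  then obtain W1 W2 where W1: "walk W1" "hd W1 = v" "walk_aut W1 = h1"
    and W2: "walk W2" "hd W2 = v" "walk_aut W2 = h2" by blast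
  have h1: "graph_aut V E h1" "h1 \<in> carrier (BijGroup V)"
    using W1(1,3) walk_aut_in_group mirror_group_aut graph_aut_carrier by blast+
  define M where "M = map h1 W2"
  have M: "walk M" "walk_aut M = h1 \<otimes>\<^bsub>BijGroup V\<^esub> h2 \<otimes>\<^bsub>BijGroup V\<^esub> inv\<^bsub>BijGroup V\<^esub> h1"
    using walk_map[OF h1(1) W2(1)] M_def W2(3) by auto
  have "hd M = last W1"
    using M_def W2(2) walk_nonempty[OF W2(1)] walk_aut_apply[OF W1(1)] W1(2,3) by (simp add: hd_map)
  then have "walk (W1 @ tl M)"
    "walk_aut (W1 @ tl M) =
      (h1 \<otimes>\<^bsub>BijGroup V\<^esub> h2 \<otimes>\<^bsub>BijGroup V\<^esub> inv\<^bsub>BijGroup V\<^esub> h1) \<otimes>\<^bsub>BijGroup V\<^esub> h1"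
    using walk_append[OF W1(1) M(1)] M(2) W1(3) by simp_all
  moreover have "(h1 \<otimes>\<^bsub>BijGroup V\<^esub> h2 \<otimes>\<^bsub>BijGroup V\<^esub> inv\<^bsub>BijGroup V\<^esub> h1) \<otimes>\<^bsub>BijGroup V\<^esub> h1 =
      h1 \<otimes>\<^bsub>BijGroup V\<^esub> h2"
    using h1(2) walk_aut_carrier[OF W2(1)] W2(3) by (simp add: Sym.m_assoc)
  ultimately show ?case using W1(2) walk_nonempty[OF W1(1)] by (intro exI[of _ "W1 @ tl M"]) simp
qed

theorem mirror_group_stabilizer_trivial:
  assumes g: "g \<in> mirror_group V E" and v: "v \<in> V" and fixed: "g v = v"
  shows "g = \<one>\<^bsub>BijGroup V\<^esub>"
proof -
  obtain W where W: "walk W" "hd W = v" "walk_aut W = g" using mirror_group_walk[OF g v] by blast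
  then have "last W = v" using walk_aut_apply[OF W(1)] fixed by simp
  then show ?thesis using closed_walk_aut[OF W(1)] W by simp
qed

theorem mirror_group_transitive: "u \<in> V \<Longrightarrow> w \<in> V \<Longrightarrow> \<exists>g\<in>mirror_group V E. g u = w"
  using walk_exists[OF connected] walk_aut_in_group walk_aut_apply by metis

lemma mirror_group_eq_if_agree:
  assumes g: "g \<in> mirror_group V E" "h \<in> mirror_group V E" and x: "x \<in> V" and eq: "g x = h x"
  shows "g = h"
proof -
  have c: "g \<in> carrier (BijGroup V)" "h \<in> carrier (BijGroup V)"
    using g subgroup.subset[OF mirror_group_subgroup] by blast+
  define k where "k = inv\<^bsub>BijGroup V\<^esub> g \<otimes>\<^bsub>BijGroup V\<^esub> h"
  have "k \<in> mirror_group V E" unfolding k_def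
    using subgroup.m_closed[OF mirror_group_subgroup subgroup.m_inv_closed[OF mirror_group_subgroup g(1)] g(2)] .
  moreover have "k x = x"
    using BijGroup_mult_apply[OF Sym.inv_closed[OF c(1)] c(2) x] BijGroup_inv_apply(2)[OF c(1) x] eq
    by (simp add: k_def)
  ultimately have "k = \<one>\<^bsub>BijGroup V\<^esub>" using mirror_group_stabilizer_trivial x by blast
  then have "inv\<^bsub>BijGroup V\<^esub> h = inv\<^bsub>BijGroup V\<^esub> g"
    using Sym.inv_equality Sym.inv_closed c unfolding k_def by blast
  then show ?thesis using Sym.inv_inv[OF c(1)] Sym.inv_inv[OF c(2)] by simp
qed

lemma mirror_group_ex1: "w \<in> V \<Longrightarrow> v \<in> V \<Longrightarrow> \<exists>!h. h \<in> mirror_group V E \<and> h w = v"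
  using mirror_group_transitive mirror_group_eq_if_agree by metis

lemma edge_iff_cayley_adj:
  assumes g: "g \<in> mirror_group V E" "g x = v" and h: "h \<in> mirror_group V E" "h y = v"
    and xy: "x \<in> V" "y \<in> V"
  shows "E x y \<longleftrightarrow> cayley_adj (BijGroup V) {mirror_aut V E v u | u. E v u} g h"
proof -
  have g_aut: "graph_aut V E g" and hc: "h \<in> carrier (BijGroup V)"
    using mirror_group_aut g(1) h(1) graph_aut_carrier by blast+
  have step: "(mirror_aut V E v u \<otimes>\<^bsub>BijGroup V\<^esub> h) y = u" if "E v u" for u
    using BijGroup_mult_apply[OF mirror_aut_carrier[OF that] hc xy(2)] h(2) mirror_aut(2)[OF that]
    by simp
  show ?thesis
  proof
    assume "E x y"
    then have u: "E v (g y)" using aut_edge[OF g_aut] g(2) by metis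
    have "mirror_aut V E v (g y) \<otimes>\<^bsub>BijGroup V\<^esub> h \<in> mirror_group V E"
      using subgroup.m_closed[OF mirror_group_subgroup mirror_aut_in_group[OF u] h(1)] .
    then have "g = mirror_aut V E v (g y) \<otimes>\<^bsub>BijGroup V\<^esub> h"
      using mirror_group_eq_if_agree[OF g(1) _ xy(2)] step[OF u] by metis
    then show "cayley_adj (BijGroup V) {mirror_aut V E v u | u. E v u} g h"
      unfolding cayley_adj_def using u by blast
  next
    assume "cayley_adj (BijGroup V) {mirror_aut V E v u | u. E v u} g h"
    then obtain u where u: "E v u" "g = mirror_aut V E v u \<otimes>\<^bsub>BijGroup V\<^esub> h"
      unfolding cayley_adj_def by blast
    then have "E (g x) (g y)" using step g(2) by simp
    then show "E x y" using g_aut xy unfolding graph_aut_def by blast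
  qed
qed

theorem mirror_group_cayley:
  assumes v: "v \<in> V"
  shows "graph_iso V E (mirror_group V E) (cayley_adj (BijGroup V) {mirror_aut V E v u | u. E v u})"
proof -
  define \<phi> where "\<phi> w = (THE h. h \<in> mirror_group V E \<and> h w = v)" for w
  have \<phi>: "\<phi> w \<in> mirror_group V E" "\<phi> w w = v" if "w \<in> V" for w
    using theI'[OF mirror_group_ex1[OF that v]] unfolding \<phi>_def by blast+
  have "bij_betw \<phi> V (mirror_group V E)"
  proof (rule bij_betwI')
    fix x y assume xy: "x \<in> V" "y \<in> V"
    show "\<phi> x = \<phi> y \<longleftrightarrow> x = y"
    proof
      assume "\<phi> x = \<phi> y"
      then have "\<phi> x x = \<phi> x y" using \<phi>(2)[OF xy(1)] \<phi>(2)[OF xy(2)] by simp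
      then show "x = y" using aut_inj[OF mirror_group_aut[OF \<phi>(1)[OF xy(1)]] xy] by simp
    qed simp
  next
    fix x assume "x \<in> V"
    then show "\<phi> x \<in> mirror_group V E" by (rule \<phi>(1))
  next
    fix h assume h: "h \<in> mirror_group V E"
    then obtain w where w: "w \<in> V" "h w = v" using aut_surj[OF mirror_group_aut v] by blast
    then have "\<phi> w = h" using mirror_group_ex1[OF w(1) v] \<phi>[OF w(1)] h by blast
    then show "\<exists>x\<in>V. h = \<phi> x" using w by blast
  qed
  then show ?thesis
    unfolding graph_iso_def using edge_iff_cayley_adj[OF \<phi>(1,2) \<phi>(1,2)] by blast
qed

end

theorem mainTheorem9:
  fixes V :: "'a set" and E :: "'a \<Rightarrow> 'a \<Rightarrow> bool"
  assumes "mirror_graph V E"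
  shows "(\<forall>u\<in>V. \<forall>w\<in>V. \<exists>\<alpha>\<in>mirror_group V E. \<alpha> u = w)
       \<and> (\<forall>\<alpha>\<in>mirror_group V E. \<forall>v\<in>V. \<alpha> v = v \<longrightarrow> \<alpha> = \<one>\<^bsub>BijGroup V\<^esub>)
       \<and> (\<forall>v\<in>V. graph_iso V E (mirror_group V E)
             (cayley_adj (BijGroup V) {mirror_aut V E v u | u. E v u}))"
proof -
  obtain P where "mirror_partition V E P"
    using assms unfolding mirror_graph_def mirror_partition_def by (elim conjE exE) blast
  then interpret mirror_partition V E P .
  show ?thesis
    using mirror_group_transitive mirror_group_stabilizer_trivial mirror_group_cayley by blast
qed

end
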